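(* If $F$ is regular, i.e., $r''$ is bounded above on some interval $(1-\delta,1)$ with $\delta\in(0,1)$, then there exists $\alpha>1$ such that $r(v)r''(v)+r'(v)\le 1$ for every $v\in(0,1)$ with $\psi(v)\ge 1/\alpha$.
   Context: Let $F$ be a probability distribution on $[0,1]$ with support $[0,1]$ admitting a twice continuously differentiable density $f:(0,1)\to\mathbb{R}_{>0}$. Define the inverse hazard rate $r(v)=(1-F(v))/f(v)$ and the virtual valuation $\psi(v)=v-r(v)$ on $(0,1)$, and assume $\psi'(v)>0$ whenever $\psi(v)>0$. *)

theory Defs
  imports "HOL-Analysis.Analysis"
begin

definition cdf :: "(real \<Rightarrow> real) \<Rightarrow> real \<Rightarrow> real" where
  "cdf f v = integral {0..v} f"

definition ihr :: "(real \<Rightarrow> real) \<Rightarrow> real \<Rightarrow> real" where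
  "ihr f v = (1 - cdf f v) / f v"

definition virt_val :: "(real \<Rightarrow> real) \<Rightarrow> real \<Rightarrow> real" where
  "virt_val f v = v - ihr f v"

end

(* Write r = ihr f. If \<psi>(w) \<ge> 1 - \<epsilon> then w \<ge> 1 - \<epsilon> and 0 \<le> r(w) \<le> \<epsilon>. On a window
   [w - h, w] inside (1 - \<delta>, 1) we have r'' \<le> M, and since r \<ge> 0 Taylor's formula at w gives
   0 \<le> r(w - h) \<le> r(w) - h r'(w) + M h^2/2, i.e. r'(w) \<le> \<epsilon>/h + M h/2, while r r'' \<le> \<epsilon> M.
   With h of order 1/M and \<epsilon> = h/4 both terms are at most 1/2, and \<alpha> = 1/(1 - \<epsilon>). *)

theory Submission
  imports Defs
begin

lemma cdf_has_real_derivative: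
  fixes f :: "real \<Rightarrow> real"
  assumes "f integrable_on {0..1}" and "isCont f v" and "v \<in> {0<..<1}"
  shows "(cdf f has_real_derivative f v) (at v)"
proof -
  have "((\<lambda>u. integral {0..u} f) has_vector_derivative f v) (at v within {0..1})"
    using integral_has_vector_derivative_continuous_at[of f 0 1 v "{}"] assms
    by (auto intro: continuous_at_imp_continuous_at_within)
  moreover have "at v within {0..1::real} = at v"
    using assms(3) by (intro at_within_interior) auto
  ultimately show ?thesis
    by (simp add: cdf_def[abs_def] has_real_derivative_iff_has_vector_derivative)
qed

lemma cdf_le_1:
  fixes f :: "real \<Rightarrow> real"
  assumes pos: "\<And>v. v \<in> {0<..<1} \<Longrightarrow> f v > 0"
    and integrable: "f integrable_on {0..1}" and total: "integral {0..1} f = 1"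
    and v: "v \<in> {0..1}"
  shows "cdf f v \<le> 1"
proof -
  have "integral {0..v} f + integral {v..1} f = 1"
    using Henstock_Kurzweil_Integration.integral_combine[OF _ _ integrable, of v] v total by auto
  moreover have "f integrable_on {v<..<1}"
    using integrable_subinterval_real[OF integrable, of v 1] v
    by (simp add: integrable_on_open_interval_real)
  then have "integral {v..1} f \<ge> 0"
    unfolding integral_open_interval_real
    by (rule integral_nonneg) (use v pos in \<open>auto intro: less_imp_le\<close>)
  ultimately show ?thesis by (simp add: cdf_def)
qed

lemma ihr_nonneg:
  fixes f :: "real \<Rightarrow> real"
  assumes "\<And>v. v \<in> {0<..<1} \<Longrightarrow> f v > 0"
    and "f integrable_on {0..1}" and "integral {0..1} f = 1"
    and "v \<in> {0<..<1}"
  shows "ihr f v \<ge> 0"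
  using cdf_le_1[OF assms(1-3), of v] assms(1,4) by (simp add: ihr_def less_imp_le)

lemma has_real_derivative_deriv_of_has_real_derivative_on_open:
  fixes g E :: "real \<Rightarrow> real"
  assumes "open S" "x \<in> S"
    and "\<And>y. y \<in> S \<Longrightarrow> (g has_real_derivative E y) (at y)"
    and "(E has_real_derivative D) (at x)"
  shows "(deriv g has_real_derivative D) (at x)"
  using assms(4)
  by (rule has_field_derivative_transform_within_open[OF _ assms(1,2)])
     (use assms(3) DERIV_imp_deriv in metis)

lemma ihr_twice_differentiable:
  fixes f f' f'' :: "real \<Rightarrow> real"
  assumes pos: "\<And>v. v \<in> {0<..<1} \<Longrightarrow> f v > 0"
    and d1: "\<And>v. v \<in> {0<..<1} \<Longrightarrow> (f has_real_derivative f' v) (at v)"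
    and d2: "\<And>v. v \<in> {0<..<1} \<Longrightarrow> (f' has_real_derivative f'' v) (at v)"
    and integrable: "f integrable_on {0..1}"
    and x: "x \<in> {0<..<1}"
  shows "(ihr f has_real_derivative deriv (ihr f) x) (at x)"
    and "(deriv (ihr f) has_real_derivative deriv (deriv (ihr f)) x) (at x)"
proof -
  define E where "E y = - 1 - (1 - cdf f y) * f' y / (f y)\<^sup>2" for y
  have cdf': "(cdf f has_real_derivative f y) (at y)" if "y \<in> {0<..<1}" for y
    by (rule cdf_has_real_derivative[OF integrable DERIV_isCont[OF d1[OF that]] that])
  have ihr': "(ihr f has_real_derivative E y) (at y)" if y: "y \<in> {0<..<1}" for y
    unfolding ihr_def[abs_def] E_def
    using y pos[OF y] by (auto intro!: derivative_eq_intros cdf' d1 simp: field_simps power2_eq_square)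
  then show "(ihr f has_real_derivative deriv (ihr f) x) (at x)"
    using x DERIV_imp_deriv by metis
  have "\<exists>D. (E has_real_derivative D) (at x)"
    unfolding E_def[abs_def]
    using x pos[OF x] by (auto intro!: exI derivative_eq_intros cdf' d1 d2)
  then obtain D where "(E has_real_derivative D) (at x)" ..
  then have "(deriv (ihr f) has_real_derivative D) (at x)"
    using has_real_derivative_deriv_of_has_real_derivative_on_open[OF open_greaterThanLessThan x] ihr'
    by blast
  then show "(deriv (ihr f) has_real_derivative deriv (deriv (ihr f)) x) (at x)"
    using DERIV_imp_deriv by metis
qed

lemma deriv_bound_of_nonneg_of_second_deriv_le:
  fixes g g' g'' :: "real \<Rightarrow> real"
  assumes h: "0 < h"
    and d1: "\<And>t. t \<in> {w - h..w} \<Longrightarrow> (g has_real_derivative g' t) (at t)"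
    and d2: "\<And>t. t \<in> {w - h..w} \<Longrightarrow> (g' has_real_derivative g'' t) (at t)"
    and bound: "\<And>t. t \<in> {w - h..w} \<Longrightarrow> g'' t \<le> M"
    and nonneg: "g (w - h) \<ge> 0"
  shows "g' w * h \<le> g w + M * h\<^sup>2 / 2"
proof -
  define diff where "diff m = (if m = 0 then g else if m = 1 then g' else g'')" for m :: nat
  have "\<forall>m t. m < 2 \<and> w - h \<le> t \<and> t \<le> w \<longrightarrow> (diff m has_real_derivative diff (Suc m) t) (at t)"
    using d1 d2 by (auto simp: diff_def less_2_cases_iff)
  then obtain t where t: "w - h < t" "t < w"
    and taylor: "g (w - h) = g w - g' w * h + g'' t / 2 * h\<^sup>2"
    using Taylor_down[of 2 diff g "w - h" w w] h
    by (auto simp: diff_def eval_nat_numeral power2_eq_square)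
  have "g'' t * h\<^sup>2 \<le> M * h\<^sup>2"
    using bound[of t] t by (intro mult_right_mono) auto
  then show ?thesis
    using taylor nonneg by linarith
qed

lemma prod_second_deriv_add_deriv_le_1_near_1:
  fixes g g' g'' :: "real \<Rightarrow> real"
  assumes nonneg: "\<And>x. x \<in> {0<..<1} \<Longrightarrow> g x \<ge> 0"
    and d1: "\<And>x. x \<in> {0<..<1} \<Longrightarrow> (g has_real_derivative g' x) (at x)"
    and d2: "\<And>x. x \<in> {0<..<1} \<Longrightarrow> (g' has_real_derivative g'' x) (at x)"
    and \<delta>: "0 < \<delta>" "\<delta> \<le> 1"
    and bound: "\<And>x. x \<in> {1 - \<delta><..<1} \<Longrightarrow> g'' x \<le> M"
  shows "\<exists>\<epsilon>>0. \<epsilon> < 1 \<and> (\<forall>w \<in> {0<..<1}. w - g w \<ge> 1 - \<epsilon> \<longrightarrow> g w * g'' w + g' w \<le> 1)"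
proof -
  define M0 where "M0 = max M 1"
  define h where "h = min (\<delta> / 2) (1 / (2 * M0))"
  have M0: "M0 \<ge> 1" "M \<le> M0"
    by (auto simp: M0_def)
  have h: "0 < h" "h \<le> \<delta> / 2" "M0 * h \<le> 1 / 2"
    using \<delta> M0 by (auto simp: h_def min_def field_simps)
  have "g w * g'' w + g' w \<le> 1"
    if w: "w \<in> {0<..<1}" and near: "w - g w \<ge> 1 - h / 4" for w
  proof -
    have gw: "0 \<le> g w" "g w \<le> h / 4"
      using nonneg[OF w] near w by auto
    have window: "{w - h..w} \<subseteq> {1 - \<delta><..<1}"
      using gw near w h by auto
    with \<delta> have inside: "t \<in> {0<..<1}" if "t \<in> {w - h..w}" for t
      using that by auto
    have "g' w * h \<le> g w + M0 * h\<^sup>2 / 2"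
    proof (rule deriv_bound_of_nonneg_of_second_deriv_le[where g = g and g' = g' and g'' = g'' and w = w, OF h(1)])
      show "g'' t \<le> M0" if "t \<in> {w - h..w}" for t
        using bound[of t] window that M0(2) by auto
      show "g (w - h) \<ge> 0"
        using h(1) by (intro nonneg inside) auto
    qed (use d1 d2 inside in auto)
    also have "\<dots> \<le> h / 4 + h / 4"
    proof -
      have "M0 * h\<^sup>2 / 2 = (M0 * h) * h / 2"
        by (simp add: power2_eq_square)
      also have "\<dots> \<le> h / 4"
        using mult_right_mono[OF h(3) less_imp_le[OF h(1)]] by simp
      finally show ?thesis
        using gw by linarith
    qed
    finally have "g' w \<le> 1 / 2"
      using h(1) by (simp add: field_simps)
    moreover have "g w * g'' w \<le> h / 4 * M0"
    proof -
      have "g'' w \<le> M0"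
        using bound[OF subsetD[OF window, of w]] h(1) M0(2) by auto
      then have "g w * g'' w \<le> g w * M0"
        using gw(1) by (rule mult_left_mono)
      also have "\<dots> \<le> h / 4 * M0"
        using gw(2) M0(1) by (intro mult_right_mono) auto
      finally show ?thesis .
    qed
    ultimately show ?thesis
      using h(3) by (simp add: field_simps)
  qed
  moreover have "h / 4 < 1"
    using h \<delta> by simp
  ultimately show ?thesis
    using h(1) by (intro exI[of _ "h / 4"]) auto
qed

theorem lemma7:
  fixes f f' f'' :: "real \<Rightarrow> real"
  assumes pos: "\<And>v. v \<in> {0<..<1} \<Longrightarrow> f v > 0"
    and d1: "\<And>v. v \<in> {0<..<1} \<Longrightarrow> (f has_real_derivative f' v) (at v)"
    and d2: "\<And>v. v \<in> {0<..<1} \<Longrightarrow> (f' has_real_derivative f'' v) (at v)"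
    and c2: "continuous_on {0<..<1} f''"
    and integrable: "f integrable_on {0..1}"
    and total: "integral {0..1} f = 1"
    and mono_psi: "\<And>v. v \<in> {0<..<1} \<Longrightarrow> virt_val f v > 0 \<Longrightarrow> deriv (virt_val f) v > 0"
    and regular: "\<exists>\<delta> M. 0 < \<delta> \<and> \<delta> < 1 \<and>
        (\<forall>v \<in> {1 - \<delta><..<1}. deriv (deriv (ihr f)) v \<le> M)"
  shows "\<exists>\<alpha>::real. \<alpha> > 1 \<and> (\<forall>v \<in> {0<..<1}. virt_val f v \<ge> 1 / \<alpha> \<longrightarrow>
           ihr f v * deriv (deriv (ihr f)) v + deriv (ihr f) v \<le> 1)"
proof -
  obtain \<delta> M where \<delta>: "0 < \<delta>" "\<delta> < 1"
    and bound: "\<And>v. v \<in> {1 - \<delta><..<1} \<Longrightarrow> deriv (deriv (ihr f)) v \<le> M"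
    using regular by blast
  have "\<exists>\<epsilon>>0. \<epsilon> < 1 \<and> (\<forall>w \<in> {0<..<1}. w - ihr f w \<ge> 1 - \<epsilon> \<longrightarrow>
      ihr f w * deriv (deriv (ihr f)) w + deriv (ihr f) w \<le> 1)"
  proof (rule prod_second_deriv_add_deriv_le_1_near_1[OF _ _ _ \<delta>(1) less_imp_le[OF \<delta>(2)] bound])
    show "ihr f x \<ge> 0" if "x \<in> {0<..<1}" for x
      using ihr_nonneg pos integrable total that by blast
  qed (use ihr_twice_differentiable pos d1 d2 integrable in blast)+
  then obtain \<epsilon> where \<epsilon>: "0 < \<epsilon>" "\<epsilon> < 1"
    and near_1: "\<forall>w \<in> {0<..<1}. w - ihr f w \<ge> 1 - \<epsilon> \<longrightarrow>
      ihr f w * deriv (deriv (ihr f)) w + deriv (ihr f) w \<le> 1"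
    by blast
  show ?thesis
  proof (intro exI[of _ "1 / (1 - \<epsilon>)"] conjI)
    show "1 / (1 - \<epsilon>) > 1"
      using \<epsilon> by simp
    show "\<forall>v \<in> {0<..<1}. virt_val f v \<ge> 1 / (1 / (1 - \<epsilon>)) \<longrightarrow>
        ihr f v * deriv (deriv (ihr f)) v + deriv (ihr f) v \<le> 1"
      using near_1 by (simp add: virt_val_def)
  qed
qed

end
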